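(* Fix the domain $[n]^d$ and a product distribution $\mathcal{D}$ on $[n]^d$. Suppose there is a $Q$-query tester for a bounded-derivative property $\mathcal{P}(\mathcal{B})$ with respect to $\mathcal{D}$ with proximity parameter $\varepsilon$. Then there is a $(Q+10/\varepsilon)$-query tester for monotonicity of functions $f:[n]^d\to\mathbb{N}$ with respect to $\mathcal{D}$ with proximity parameter $2\varepsilon$.
   Context: A bounding family is a tuple of $2d$ functions $l_1,u_1,\dots,l_d,u_d:[n-1]\to\mathbb{R}$ with $l_r(y)<u_r(y)$; the bounded-derivative property $\mathcal{P}(\mathcal{B})$ is the set of $f:[n]^d\to\mathbb{R}$ with $l_r(x_r)\le f(x+\mathbf{e}_r)-f(x)\le u_r(x_r)$ for all $r$ and $x$ with $x_r<n$. $f$ is monotone if $f(x)\le f(y)$ whenever $x\le y$ coordinatewise. A tester for a property $\mathcal{P}$ w.r.t. $\mathcal{D}$ with proximity parameter $\varepsilon$ has query access to $f$, accepts with probability $>2/3$ if $f\in\mathcal{P}$, and rejects with probability $>2/3$ if $\inf_{g\in\mathcal{P}}\Pr_{x\sim\mathcal{D}}[f(x)\ne g(x)]>\varepsilon$. *)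

theory Defs
  imports "HOL-Probability.Probability"
begin

text \<open>Points of the grid [n]^d are functions x :: nat => nat with x i in {1..n}
  for coordinates i < d and x i = 0 for i >= d (coordinates are indexed 0..d-1).\<close>

definition grid :: "nat \<Rightarrow> nat \<Rightarrow> (nat \<Rightarrow> nat) set" where
  "grid n d = {x. (\<forall>i<d. x i \<in> {1..n}) \<and> (\<forall>i. d \<le> i \<longrightarrow> x i = 0)}"

definition product_dist :: "nat \<Rightarrow> (nat \<Rightarrow> nat pmf) \<Rightarrow> (nat \<Rightarrow> nat) pmf" where
  "product_dist d Ds = Pi_pmf {..<d} 0 Ds"

text \<open>Deterministic adaptive query algorithms: decision trees that query a point
  and branch on the returned value; leaves output accept (True) / reject (False).\<close>

datatype ('x, 'v) qtree = Leaf bool | Query 'x "'v \<Rightarrow> ('x, 'v) qtree"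

primrec run :: "('x, 'v) qtree \<Rightarrow> ('x \<Rightarrow> 'v) \<Rightarrow> bool" where
  "run (Leaf b) f = b"
| "run (Query x k) f = run (k (f x)) f"

primrec num_queries :: "('x, 'v) qtree \<Rightarrow> ('x \<Rightarrow> 'v) \<Rightarrow> nat" where
  "num_queries (Leaf b) f = 0"
| "num_queries (Query x k) f = Suc (num_queries (k (f x)) f)"

inductive queries_in :: "'x set \<Rightarrow> ('x, 'v) qtree \<Rightarrow> bool" for G where
  "queries_in G (Leaf b)"
| "x \<in> G \<Longrightarrow> (\<And>v. queries_in G (k v)) \<Longrightarrow> queries_in G (Query x k)"

definition dist_to :: "'x pmf \<Rightarrow> ('x \<Rightarrow> 'v) \<Rightarrow> ('x \<Rightarrow> 'v) set \<Rightarrow> real" where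
  "dist_to D f P = (INF g\<in>P. measure_pmf.prob D {x. f x \<noteq> g x})"

definition is_tester ::
  "('x, 'v) qtree pmf \<Rightarrow> real \<Rightarrow> 'x set \<Rightarrow> ('x \<Rightarrow> 'v) set \<Rightarrow> 'x pmf \<Rightarrow> real \<Rightarrow> bool" where
  "is_tester T q G P D \<epsilon> \<longleftrightarrow>
     (\<forall>t\<in>set_pmf T. queries_in G t \<and> (\<forall>f. real (num_queries t f) \<le> q)) \<and>
     (\<forall>f\<in>P. measure_pmf.prob T {t. run t f} > 2/3) \<and>
     (\<forall>f. dist_to D f P > \<epsilon> \<longrightarrow> measure_pmf.prob T {t. \<not> run t f} > 2/3)"

definition bounding_family :: "nat \<Rightarrow> nat \<Rightarrow> (nat \<Rightarrow> nat \<Rightarrow> real) \<Rightarrow> (nat \<Rightarrow> nat \<Rightarrow> real) \<Rightarrow> bool" where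
  "bounding_family n d l u \<longleftrightarrow> (\<forall>r<d. \<forall>y\<in>{1..n-1}. l r y < u r y)"

definition bounded_derivative_property ::
  "nat \<Rightarrow> nat \<Rightarrow> (nat \<Rightarrow> nat \<Rightarrow> real) \<Rightarrow> (nat \<Rightarrow> nat \<Rightarrow> real) \<Rightarrow> ((nat \<Rightarrow> nat) \<Rightarrow> real) set" where
  "bounded_derivative_property n d l u =
     {f. \<forall>r<d. \<forall>x\<in>grid n d. x r < n \<longrightarrow>
          l r (x r) \<le> f (x(r := x r + 1)) - f x \<and> f (x(r := x r + 1)) - f x \<le> u r (x r)}"

definition monotone_fns :: "nat \<Rightarrow> nat \<Rightarrow> ((nat \<Rightarrow> nat) \<Rightarrow> nat) set" where
  "monotone_fns n d =
     {f. \<forall>x\<in>grid n d. \<forall>y\<in>grid n d. (\<forall>i<d. x i \<le> y i) \<longrightarrow> f x \<le> f y}"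

end

theory Submission
  imports Defs
begin

text \<open>A monotone \<open>f\<close> is encoded as \<open>x \<mapsto> \<Phi> x + \<phi> (f x)\<close>, where \<open>\<Phi> x = \<Sum>\<^sub>r (l r 1 + \<dots> + l r (x r - 1))\<close>
  realises every lower bound exactly and \<open>\<phi>\<close> is strictly increasing with range in \<open>[0, \<delta>]\<close>
  for \<open>\<delta>\<close> below every gap \<open>u r y - l r y\<close>. The encoding maps monotone functions into
  \<open>\<P>(\<B>)\<close>; conversely, if it agrees with some \<open>g \<in> \<P>(\<B>)\<close> on a set \<open>A\<close>, then \<open>f\<close> is monotone
  on \<open>A\<close> because \<open>g - \<Phi>\<close> is monotone, so \<open>f\<close> extends from \<open>A\<close> to a monotone function and
  distances do not increase. A tester for \<open>\<P>(\<B>)\<close> run on the encoded values, which it can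
  compute query by query, is therefore a monotonicity tester with the same query count.\<close>

primrec relabel :: "('x \<Rightarrow> 'w \<Rightarrow> 'v) \<Rightarrow> ('x, 'v) qtree \<Rightarrow> ('x, 'w) qtree" where
  "relabel c (Leaf b) = Leaf b"
| "relabel c (Query x k) = Query x (\<lambda>w. relabel c (k (c x w)))"

lemma run_relabel: "run (relabel c t) f = run t (\<lambda>x. c x (f x))"
  by (induction t) auto

lemma num_queries_relabel: "num_queries (relabel c t) f = num_queries t (\<lambda>x. c x (f x))"
  by (induction t) auto

lemma queries_in_relabel: "queries_in G t \<Longrightarrow> queries_in G (relabel c t)"
  by (induction rule: queries_in.induct) (auto intro: queries_in.intros)

lemma is_tester_relabel:
  assumes "is_tester T q G P D \<epsilon>"
    and "\<And>f. f \<in> P' \<Longrightarrow> (\<lambda>x. c x (f x)) \<in> P"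
    and "\<And>f. dist_to D f P' \<le> dist_to D (\<lambda>x. c x (f x)) P"
    and "q \<le> q'" and "\<epsilon> \<le> \<epsilon>'"
  shows "is_tester (map_pmf (relabel c) T) q' G P' D \<epsilon>'"
  unfolding is_tester_def
proof (intro conjI ballI allI impI)
  fix t assume "t \<in> set_pmf (map_pmf (relabel c) T)"
  then obtain t0 where t0: "t0 \<in> set_pmf T" "t = relabel c t0" by auto
  show "queries_in G t"
    using t0 assms(1) queries_in_relabel unfolding is_tester_def by blast
  fix f
  have "real (num_queries t0 (\<lambda>x. c x (f x))) \<le> q"
    using t0(1) assms(1) unfolding is_tester_def by blast
  then show "real (num_queries t f) \<le> q'"
    using assms(4) unfolding t0(2) num_queries_relabel by linarith
next
  fix f assume "f \<in> P'"
  then show "measure_pmf.prob (map_pmf (relabel c) T) {t. run t f} > 2/3"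
    using assms(1,2) unfolding is_tester_def by (simp add: vimage_def run_relabel)
next
  fix f assume "dist_to D f P' > \<epsilon>'"
  then have "dist_to D (\<lambda>x. c x (f x)) P > \<epsilon>" using assms(3)[of f] assms(5) by simp
  then show "measure_pmf.prob (map_pmf (relabel c) T) {t. \<not> run t f} > 2/3"
    using assms(1) unfolding is_tester_def by (simp add: vimage_def run_relabel)
qed

lemma finite_grid: "finite (grid n d)"
proof -
  have "inj_on (\<lambda>x. map x [0..<d]) (grid n d)"
  proof (rule inj_onI, rule ext)
    fix x y i assume "x \<in> grid n d" "y \<in> grid n d" "map x [0..<d] = map y [0..<d]"
    then show "x i = y i"
      by (cases "i < d") (auto simp: grid_def map_eq_conv)
  qed
  moreover have "(\<lambda>x. map x [0..<d]) ` grid n d \<subseteq> {xs. set xs \<subseteq> {0..n} \<and> length xs = d}"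
    by (auto simp: grid_def)
  moreover have "finite {xs. set xs \<subseteq> {0..n} \<and> length xs = d}"
    by (rule finite_lists_length_eq) simp
  ultimately show ?thesis by (metis finite_imageD finite_subset)
qed

lemma set_pmf_product_dist_subset_grid:
  assumes "\<forall>i<d. set_pmf (Ds i) \<subseteq> {1..n}"
  shows "set_pmf (product_dist d Ds) \<subseteq> grid n d"
  using assms unfolding product_dist_def set_Pi_pmf[OF finite_lessThan] PiE_dflt_def grid_def
  by fastforce

lemma grid_upd_Suc: "x \<in> grid n d \<Longrightarrow> r < d \<Longrightarrow> x r < n \<Longrightarrow> x(r := x r + 1) \<in> grid n d"
  by (auto simp: grid_def)

lemma grid_mono_if_step_mono:
  fixes h :: "(nat \<Rightarrow> nat) \<Rightarrow> real"
  assumes step: "\<And>r x. r < d \<Longrightarrow> x \<in> grid n d \<Longrightarrow> x r < n \<Longrightarrow> h x \<le> h (x(r := x r + 1))"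
  shows "x \<in> grid n d \<Longrightarrow> y \<in> grid n d \<Longrightarrow> \<forall>i<d. y i \<le> x i \<Longrightarrow> h y \<le> h x"
proof (induction "\<Sum>i<d. x i - y i" arbitrary: y rule: less_induct)
  case less
  show ?case
  proof (cases "\<exists>i<d. y i < x i")
    case False
    then have "y = x" using less.prems by (auto simp: grid_def fun_eq_iff) (metis le_less not_le)
    then show ?thesis by simp
  next
    case True
    then obtain i where i: "i < d" "y i < x i" by blast
    have yi: "y i < n" using i less.prems by (auto simp: grid_def)
    let ?y = "y(i := y i + 1)"
    have "(\<Sum>j<d. x j - ?y j) < (\<Sum>j<d. x j - y j)"
      by (rule sum_strict_mono_ex1) (use i in auto)
    then have "h ?y \<le> h x"
      using less grid_upd_Suc[OF less.prems(2) i(1) yi] i by auto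
    then show ?thesis using step[OF i(1) less.prems(2) yi] by simp
  qed
qed

lemma monotone_extension:
  fixes f :: "(nat \<Rightarrow> nat) \<Rightarrow> nat"
  assumes "A \<subseteq> grid n d"
    and mono_on_A: "\<And>x y. x \<in> A \<Longrightarrow> y \<in> A \<Longrightarrow> \<forall>i<d. y i \<le> x i \<Longrightarrow> f y \<le> f x"
  shows "\<exists>f' \<in> monotone_fns n d. \<forall>x\<in>A. f' x = f x"
proof -
  define below where "below x = {y \<in> A. \<forall>i<d. y i \<le> x i}" for x
  define f' where "f' x = Max (insert 0 (f ` below x))" for x
  have fin: "finite (below x)" for x
    using assms(1) finite_grid unfolding below_def by (auto intro: finite_subset)
  have below_mono: "below x \<subseteq> below y" if "\<forall>i<d. x i \<le> y i" for x y
    using that unfolding below_def by (auto intro: order_trans)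
  have "f' \<in> monotone_fns n d"
    unfolding monotone_fns_def f'_def
  proof (intro CollectI ballI impI)
    fix x y :: "nat \<Rightarrow> nat" assume "\<forall>i<d. x i \<le> y i"
    then have "insert 0 (f ` below x) \<subseteq> insert 0 (f ` below y)"
      using below_mono by blast
    then show "Max (insert 0 (f ` below x)) \<le> Max (insert 0 (f ` below y))"
      using fin by (intro Max_mono) auto
  qed
  moreover have "f' x = f x" if "x \<in> A" for x
    using that fin[of x] mono_on_A[OF that] unfolding f'_def
    by (intro antisym Max.boundedI Max_ge) (auto simp: below_def)
  ultimately show ?thesis by blast
qed

definition lower_potential :: "nat \<Rightarrow> (nat \<Rightarrow> nat \<Rightarrow> real) \<Rightarrow> (nat \<Rightarrow> nat) \<Rightarrow> real" where
  "lower_potential d l x = (\<Sum>r<d. \<Sum>y\<in>{1..<x r}. l r y)"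

lemma lower_potential_upd_Suc:
  assumes "r < d" "1 \<le> x r"
  shows "lower_potential d l (x(r := x r + 1)) = lower_potential d l x + l r (x r)"
proof -
  have split: "lower_potential d l z
      = (\<Sum>y\<in>{1..<z r}. l r y) + (\<Sum>r'\<in>{..<d}-{r}. \<Sum>y\<in>{1..<z r'}. l r' y)" for z
    unfolding lower_potential_def using assms(1) by (subst sum.remove[of _ r]) auto
  have "(\<Sum>r'\<in>{..<d}-{r}. \<Sum>y\<in>{1..<(x(r := x r + 1)) r'}. l r' y)
      = (\<Sum>r'\<in>{..<d}-{r}. \<Sum>y\<in>{1..<x r'}. l r' y)"
    by (rule sum.cong) auto
  moreover have "(\<Sum>y\<in>{1..<x r + 1}. l r y) = (\<Sum>y\<in>{1..<x r}. l r y) + l r (x r)"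
    using assms(2) by (simp add: sum.atLeastLessThan_Suc)
  ultimately show ?thesis
    unfolding split[of "x(r := x r + 1)"] split[of x] by simp
qed

lemma bounded_derivative_minus_potential_mono:
  assumes "g \<in> bounded_derivative_property n d l u"
    and "x \<in> grid n d" "y \<in> grid n d" "\<forall>i<d. y i \<le> x i"
  shows "g y - lower_potential d l y \<le> g x - lower_potential d l x"
proof (rule grid_mono_if_step_mono[OF _ assms(2-4)])
  fix r x assume "r < d" "x \<in> grid n d" "x r < n"
  moreover from this have "1 \<le> x r" by (auto simp: grid_def)
  ultimately show "g x - lower_potential d l x
      \<le> g (x(r := x r + 1)) - lower_potential d l (x(r := x r + 1))"
    using assms(1) lower_potential_upd_Suc[of r d x l]
    unfolding bounded_derivative_property_def by fastforce
qed

lemma bounding_family_gap_lower_bound: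
  assumes "bounding_family n d l u"
  obtains \<delta> :: real where "0 < \<delta>" "\<And>r y. r < d \<Longrightarrow> y \<in> {1..n-1} \<Longrightarrow> \<delta> \<le> u r y - l r y"
proof
  define S where "S = (\<lambda>(r, y). u r y - l r y) ` ({..<d} \<times> {1..n-1})"
  have "finite S" "\<forall>s\<in>S. 0 < s"
    using assms unfolding S_def bounding_family_def by auto
  then show "0 < Min (insert 1 S)" by (subst Min_gr_iff) auto
  fix r y assume "r < d" "y \<in> {1..n-1}"
  then have "u r y - l r y \<in> S" unfolding S_def by force
  then show "Min (insert 1 S) \<le> u r y - l r y" using \<open>finite S\<close> by (intro Min_le) auto
qed

context
  fixes n d :: nat and l u :: "nat \<Rightarrow> nat \<Rightarrow> real" and \<phi> :: "nat \<Rightarrow> real" and \<delta> :: real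
  assumes gap: "\<And>r y. r < d \<Longrightarrow> y \<in> {1..n-1} \<Longrightarrow> \<delta> \<le> u r y - l r y"
    and \<phi>_strict_mono: "strict_mono \<phi>"
    and \<phi>_range: "\<And>v. 0 \<le> \<phi> v \<and> \<phi> v \<le> \<delta>"
begin

lemma potential_encoding_in_bounded_derivative:
  assumes "f \<in> monotone_fns n d"
  shows "(\<lambda>x. lower_potential d l x + \<phi> (f x)) \<in> bounded_derivative_property n d l u"
  unfolding bounded_derivative_property_def
proof (intro CollectI allI impI ballI)
  fix r x assume r: "r < d" and x: "x \<in> grid n d" and xr: "x r < n"
  let ?x = "x(r := x r + 1)"
  have "f x \<le> f ?x"
    using assms x grid_upd_Suc[OF x r xr] unfolding monotone_fns_def by fastforce
  then have "0 \<le> \<phi> (f ?x) - \<phi> (f x)" "\<phi> (f ?x) - \<phi> (f x) \<le> \<delta>"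
    using strict_mono_less_eq[OF \<phi>_strict_mono] \<phi>_range[of "f ?x"] \<phi>_range[of "f x"] by auto
  moreover have "\<delta> \<le> u r (x r) - l r (x r)"
    using gap[OF r] x r xr by (auto simp: grid_def)
  ultimately show "l r (x r) \<le> lower_potential d l ?x + \<phi> (f ?x) - (lower_potential d l x + \<phi> (f x))
      \<and> lower_potential d l ?x + \<phi> (f ?x) - (lower_potential d l x + \<phi> (f x)) \<le> u r (x r)"
    using lower_potential_upd_Suc[of r d x l] x r by (auto simp: grid_def)
qed

lemma dist_to_monotone_le_potential_encoding:
  assumes "set_pmf D \<subseteq> grid n d"
  shows "dist_to D f (monotone_fns n d)
    \<le> dist_to D (\<lambda>x. lower_potential d l x + \<phi> (f x)) (bounded_derivative_property n d l u)"
  unfolding dist_to_def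
proof (rule cINF_greatest)
  show "bounded_derivative_property n d l u \<noteq> {}"
    using potential_encoding_in_bounded_derivative[of "\<lambda>_. 0"]
    unfolding monotone_fns_def by blast
  fix g assume g: "g \<in> bounded_derivative_property n d l u"
  define A where "A = {x \<in> grid n d. lower_potential d l x + \<phi> (f x) = g x}"
  have "f y \<le> f x" if "x \<in> A" "y \<in> A" "\<forall>i<d. y i \<le> x i" for x y
  proof -
    have "\<phi> (f y) \<le> \<phi> (f x)"
      using bounded_derivative_minus_potential_mono[OF g, of x y] that unfolding A_def by auto
    then show ?thesis using strict_mono_less_eq[OF \<phi>_strict_mono] by blast
  qed
  then obtain f' where f': "f' \<in> monotone_fns n d" "\<forall>x\<in>A. f' x = f x"
    using monotone_extension[of A n d f] unfolding A_def by blast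
  have "(INF g\<in>monotone_fns n d. measure_pmf.prob D {x. f x \<noteq> g x})
      \<le> measure_pmf.prob D {x. f x \<noteq> f' x}"
    by (rule cINF_lower[OF _ f'(1)]) (auto intro: bdd_belowI[of _ 0])
  also have "\<dots> \<le> measure_pmf.prob D {x. lower_potential d l x + \<phi> (f x) \<noteq> g x}"
    using assms f'(2) unfolding A_def
    by (intro measure_pmf.finite_measure_mono_AE) (auto simp: AE_measure_pmf_iff)
  finally show "(INF g\<in>monotone_fns n d. measure_pmf.prob D {x. f x \<noteq> g x})
      \<le> measure_pmf.prob D {x. lower_potential d l x + \<phi> (f x) \<noteq> g x}" .
qed

end

lemma strict_mono_saturating:
  assumes "0 < \<delta>"
  shows "strict_mono (\<lambda>v::nat. \<delta> - \<delta> / (real v + 1))"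
    and "0 \<le> \<delta> - \<delta> / (real v + 1) \<and> \<delta> - \<delta> / (real v + 1) \<le> \<delta>"
  using assms by (auto intro!: strict_monoI simp: field_simps)

theorem theorem5p4:
  fixes n d Q :: nat and \<epsilon> :: real and Ds :: "nat \<Rightarrow> nat pmf"
    and l u :: "nat \<Rightarrow> nat \<Rightarrow> real"
    and T :: "(nat \<Rightarrow> nat, real) qtree pmf"
  assumes "0 < \<epsilon>"
    and "\<forall>i<d. set_pmf (Ds i) \<subseteq> {1..n}"
    and "bounding_family n d l u"
    and "is_tester T (real Q) (grid n d) (bounded_derivative_property n d l u)
           (product_dist d Ds) \<epsilon>"
  shows "\<exists>T' :: (nat \<Rightarrow> nat, nat) qtree pmf.
           is_tester T' (real Q + 10 / \<epsilon>) (grid n d) (monotone_fns n d)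
             (product_dist d Ds) (2 * \<epsilon>)"
proof -
  obtain \<delta> where \<delta>: "0 < \<delta>" "\<And>r y. r < d \<Longrightarrow> y \<in> {1..n-1} \<Longrightarrow> \<delta> \<le> u r y - l r y"
    using bounding_family_gap_lower_bound[OF assms(3)] by blast
  define \<phi> where "\<phi> v = \<delta> - \<delta> / (real v + 1)" for v :: nat
  have \<phi>: "strict_mono \<phi>" "\<And>v. 0 \<le> \<phi> v \<and> \<phi> v \<le> \<delta>"
    unfolding \<phi>_def using strict_mono_saturating[OF \<delta>(1)] by auto
  have "is_tester (map_pmf (relabel (\<lambda>x v. lower_potential d l x + \<phi> v)) T)
      (real Q + 10 / \<epsilon>) (grid n d) (monotone_fns n d) (product_dist d Ds) (2 * \<epsilon>)"
  proof (rule is_tester_relabel[OF assms(4)])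
    show "(\<lambda>x. lower_potential d l x + \<phi> (f x)) \<in> bounded_derivative_property n d l u"
      if "f \<in> monotone_fns n d" for f
      using potential_encoding_in_bounded_derivative[OF \<delta>(2) \<phi> that] .
    show "dist_to (product_dist d Ds) f (monotone_fns n d)
        \<le> dist_to (product_dist d Ds) (\<lambda>x. lower_potential d l x + \<phi> (f x))
             (bounded_derivative_property n d l u)" for f
      using dist_to_monotone_le_potential_encoding[OF \<delta>(2) \<phi>
          set_pmf_product_dist_subset_grid[OF assms(2)]] .
  qed (use assms(1) in auto)
  then show ?thesis by blast
qed

end
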